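(* Let $s\ge1$, $m_1,n_1>0$, $0<N<1$, $1<n_2<m_2$, and let $n(x)=n_1(x+n_2)^N$, $m(x)=m_1(x+m_2)^M$, $a^*(x)=\dfrac{-1+\sqrt{1+4(x+1)^s}}{2(x+1)^s}$. If $M>N+s$ and $$m_2>\Big\{\frac{n_1}{2m_1}(1+\sqrt5)\Big\}^{1/(M-N-s)},$$ then $a^*(x)>\dfrac{n(x)}{m(x)}$ for all $x\ge0$. *)

theory Defs
  imports "HOL-Analysis.Analysis"
begin

end

theory Submission
  imports Defs
begin

text \<open>Rationalising the numerator, \<open>a\<^sup>*(x) = 2 / (1 + sqrt (1 + 4 y))\<close> with \<open>y = (x + 1)\<^sup>s \<ge> 1\<close>,
  and \<open>sqrt (1 + 4 y) \<le> sqrt 5 \<cdot> y\<close> gives \<open>a\<^sup>*(x) \<ge> 2 / ((1 + sqrt 5) y)\<close>.  On the other side,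
  with \<open>b = x + m\<^sub>2\<close> we have \<open>n(x)/m(x) < (n\<^sub>1/m\<^sub>1) / b\<^bsup>M-N\<^esup>\<close>, and splitting
  \<open>b\<^bsup>M-N\<^esup> = b\<^bsup>M-N-s\<^esup> b\<^sup>s\<close>, the hypothesis on \<open>m\<^sub>2\<close> (with \<open>m\<^sub>2 \<le> b\<close>) bounds the first factor below by
  \<open>(n\<^sub>1 / 2m\<^sub>1)(1 + sqrt 5)\<close>, while \<open>b \<ge> x + 1\<close> bounds the second below by \<open>y\<close>.\<close>

lemma positive_root_rationalized:
  fixes y :: real
  assumes "y > 0"
  shows "(-1 + sqrt (1 + 4 * y)) / (2 * y) = 2 / (1 + sqrt (1 + 4 * y))"
proof -
  define r where "r = sqrt (1 + 4 * y)"
  have "r \<ge> 0" "r * r = 1 + 4 * y"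
    using assms by (simp_all add: r_def)
  then have "(-1 + r) * (1 + r) = 2 * (2 * y)"
    by (simp add: algebra_simps)
  with \<open>r \<ge> 0\<close> assms have "(-1 + r) / (2 * y) = 2 / (1 + r)"
    by (simp add: frac_eq_eq)
  then show ?thesis
    by (simp only: r_def)
qed

lemma sqrt_one_plus_four_le:
  fixes y :: real
  assumes "y \<ge> 1"
  shows "sqrt (1 + 4 * y) \<le> sqrt 5 * y"
proof -
  have "y \<le> y * y"
    using assms mult_left_mono[of 1 y y] by simp
  then have "1 + 4 * y \<le> 5 * y\<^sup>2"
    using assms unfolding power2_eq_square by linarith
  then have "sqrt (1 + 4 * y) \<le> sqrt (5 * y\<^sup>2)"
    by (rule real_sqrt_le_mono)
  also have "\<dots> = sqrt 5 * y"
    using assms by (simp add: real_sqrt_mult)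
  finally show ?thesis .
qed

lemma positive_root_lower_bound:
  fixes y :: real
  assumes "y \<ge> 1"
  shows "2 / ((1 + sqrt 5) * y) \<le> (-1 + sqrt (1 + 4 * y)) / (2 * y)"
proof -
  have "2 / ((1 + sqrt 5) * y) \<le> 2 / (1 + sqrt (1 + 4 * y))"
  proof (rule divide_left_mono)
    show "1 + sqrt (1 + 4 * y) \<le> (1 + sqrt 5) * y"
      using sqrt_one_plus_four_le[OF assms] assms by (simp add: algebra_simps)
    show "0 < (1 + sqrt 5) * y * (1 + sqrt (1 + 4 * y))"
      using assms by (simp add: add_pos_nonneg)
  qed simp
  then show ?thesis
    using assms by (simp only: positive_root_rationalized)
qed

lemma powr_gt_if_root_less:
  fixes c e m :: real
  assumes "c > 0" "e > 0" "c powr (1 / e) < m"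
  shows "c < m powr e"
proof -
  have "(c powr (1 / e)) powr e < m powr e"
    using assms by (intro powr_less_mono2) auto
  with assms show ?thesis
    by (simp add: powr_powr)
qed

lemma mult_powr_less_powr_add:
  fixes c e s m b z :: real
  assumes "c > 0" "e > 0" "s \<ge> 0" "c powr (1 / e) < m" "m \<le> b" "0 < z" "z \<le> b"
  shows "c * z powr s < b powr (e + s)"
proof -
  have "0 < c powr (1 / e)"
    using assms(1) by simp
  with assms(4) have "0 < m"
    by linarith
  have "c * z powr s < m powr e * z powr s"
    using powr_gt_if_root_less[OF assms(1,2,4)] assms(6) by simp
  also have "\<dots> \<le> b powr e * z powr s"
    using assms \<open>0 < m\<close> by (intro mult_right_mono powr_mono2) auto
  also have "\<dots> \<le> b powr e * b powr s"
    using assms by (intro mult_left_mono powr_mono2) auto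
  finally show ?thesis
    by (simp add: powr_add)
qed

lemma powr_ratio_less:
  fixes a b p q n1 m1 :: real
  assumes "0 < a" "a < b" "p > 0" "n1 > 0" "m1 > 0"
  shows "n1 * a powr p / (m1 * b powr q) < n1 / (m1 * b powr (q - p))"
proof -
  have "n1 * a powr p / (m1 * b powr q) < n1 * b powr p / (m1 * b powr q)"
    using assms by (intro divide_strict_right_mono mult_strict_left_mono powr_less_mono2) auto
  also have "\<dots> = n1 / (m1 * b powr (q - p))"
    using assms by (simp add: powr_diff)
  finally show ?thesis .
qed

theorem lemma4p2:
  fixes s m1 n1 N M n2 m2 :: real
  assumes "s \<ge> 1" and "m1 > 0" and "n1 > 0" and "0 < N" and "N < 1"
    and "1 < n2" and "n2 < m2"
    and "M > N + s"
    and "m2 > ((n1 / (2 * m1)) * (1 + sqrt 5)) powr (1 / (M - N - s))"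
  shows "\<forall>x::real. x \<ge> 0 \<longrightarrow>
     (-1 + sqrt (1 + 4 * (x + 1) powr s)) / (2 * (x + 1) powr s)
       > (n1 * (x + n2) powr N) / (m1 * (x + m2) powr M)"
proof (intro allI impI)
  fix x :: real
  assume "x \<ge> 0"
  define C where "C = (n1 / (2 * m1)) * (1 + sqrt 5)"
  define y where "y = (x + 1) powr s"
  have "C > 0" "y \<ge> 1"
    using assms \<open>x \<ge> 0\<close> by (simp_all add: C_def y_def add_pos_nonneg ge_one_powr_ge_zero)
  have "C * y < (x + m2) powr (M - N)"
    using mult_powr_less_powr_add[of C "M - N - s" s m2 "x + m2" "x + 1"] assms \<open>x \<ge> 0\<close> \<open>C > 0\<close>
    by (simp add: C_def y_def)
  have "(n1 * (x + n2) powr N) / (m1 * (x + m2) powr M) < n1 / (m1 * (x + m2) powr (M - N))"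
    using assms \<open>x \<ge> 0\<close> by (intro powr_ratio_less) auto
  also have "\<dots> < n1 / (m1 * (C * y))"
    using \<open>C * y < _\<close> \<open>C > 0\<close> \<open>y \<ge> 1\<close> \<open>x \<ge> 0\<close> assms
    by (intro divide_strict_left_mono mult_strict_left_mono) auto
  also have "\<dots> = 2 / ((1 + sqrt 5) * y)"
  proof -
    define K where "K = (1 + sqrt 5) * y"
    have "K > 0"
      using \<open>y \<ge> 1\<close> by (simp add: K_def add_pos_nonneg)
    then have "n1 / (m1 * (n1 / (2 * m1) * K)) = 2 / K"
      using assms(2,3) by (simp add: field_simps)
    then show ?thesis
      by (simp add: C_def K_def mult.assoc)
  qed
  also have "\<dots> \<le> (-1 + sqrt (1 + 4 * y)) / (2 * y)"
    using \<open>y \<ge> 1\<close> by (rule positive_root_lower_bound)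
  finally show "(-1 + sqrt (1 + 4 * (x + 1) powr s)) / (2 * (x + 1) powr s)
       > (n1 * (x + n2) powr N) / (m1 * (x + m2) powr M)"
    by (simp add: y_def)
qed

end
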